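(* Let $R$ be a ring and $M$, $N$ left $R$-modules with $\operatorname{char}(M)=a$ and $\operatorname{char}(N)=b$. (1) If $a$ and $b$ are positive and coprime, then $\operatorname{Ext}^1_R(N,M)=0$. (2) If $M$ is simple and $a=0\neq b$, then $\operatorname{Ext}^1_R(N,M)=0$. (3) If $M$ and $N$ are simple and $a\neq 0=b$, then $\operatorname{Ext}^1_R(N,M)=0$.
   Context: For an $R$-module $M$, the characteristic $\operatorname{char}(M)$ is defined to be the characteristic of the ring $\operatorname{End}_R(M)$. *)

theory Defs
  imports "HOL-Algebra.Algebra"
begin

text \<open>The library locale module requires a commutative ring, so we combine
  ring R, abelian_group M and the library's module axioms.\<close>

definition left_module :: "('r, 'c) ring_scheme \<Rightarrow> ('r, 'm, 'd) module_scheme \<Rightarrow> bool" where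
  "left_module R M \<longleftrightarrow> ring R \<and> abelian_group M \<and> module_axioms R M"

definition module_hom :: "('r, 'c) ring_scheme \<Rightarrow> ('r, 'm, 'd) module_scheme
    \<Rightarrow> ('r, 'n, 'e) module_scheme \<Rightarrow> ('m \<Rightarrow> 'n) set" where
  "module_hom R M N = {f. f \<in> carrier M \<rightarrow>\<^sub>E carrier N \<and>
     (\<forall>x\<in>carrier M. \<forall>y\<in>carrier M. f (x \<oplus>\<^bsub>M\<^esub> y) = f x \<oplus>\<^bsub>N\<^esub> f y) \<and>
     (\<forall>a\<in>carrier R. \<forall>x\<in>carrier M. f (a \<odot>\<^bsub>M\<^esub> x) = a \<odot>\<^bsub>N\<^esub> f x)}"

definition End_ring :: "('r, 'c) ring_scheme \<Rightarrow> ('r, 'm, 'd) module_scheme \<Rightarrow> ('m \<Rightarrow> 'm) ring" where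
  "End_ring R M =
     \<lparr> carrier = module_hom R M M,
       Group.monoid.mult = (\<lambda>f g. compose (carrier M) f g),
       one = (\<lambda>x\<in>carrier M. x),
       Ring.ring.zero = (\<lambda>x\<in>carrier M. \<zero>\<^bsub>M\<^esub>),
       Ring.ring.add = (\<lambda>f g. (\<lambda>x\<in>carrier M. f x \<oplus>\<^bsub>M\<^esub> g x)) \<rparr>"

definition ring_char :: "('a, 'c) ring_scheme \<Rightarrow> nat" where
  "ring_char A =
     (if \<exists>n::nat. n > 0 \<and> [n] \<cdot>\<^bsub>A\<^esub> \<one>\<^bsub>A\<^esub> = \<zero>\<^bsub>A\<^esub>
      then (LEAST n::nat. n > 0 \<and> [n] \<cdot>\<^bsub>A\<^esub> \<one>\<^bsub>A\<^esub> = \<zero>\<^bsub>A\<^esub>)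
      else 0)"

definition module_char :: "('r, 'c) ring_scheme \<Rightarrow> ('r, 'm, 'd) module_scheme \<Rightarrow> nat" where
  "module_char R M = ring_char (End_ring R M)"

definition simple_module :: "('r, 'c) ring_scheme \<Rightarrow> ('r, 'm, 'd) module_scheme \<Rightarrow> bool" where
  "simple_module R M \<longleftrightarrow> left_module R M \<and> carrier M \<noteq> {\<zero>\<^bsub>M\<^esub>} \<and>
     (\<forall>H. submodule H R M \<longrightarrow> H = {\<zero>\<^bsub>M\<^esub>} \<or> H = carrier M)"

definition short_exact ::
  "('r, 'c) ring_scheme \<Rightarrow> ('r, 'm, 'd) module_scheme \<Rightarrow> ('r, 'e, 'f) module_scheme
     \<Rightarrow> ('r, 'n, 'g) module_scheme \<Rightarrow> ('m \<Rightarrow> 'e) \<Rightarrow> ('e \<Rightarrow> 'n) \<Rightarrow> bool" where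
  "short_exact R M E N f g \<longleftrightarrow>
     left_module R M \<and> left_module R E \<and> left_module R N \<and>
     f \<in> module_hom R M E \<and> g \<in> module_hom R E N \<and>
     inj_on f (carrier M) \<and> g ` carrier E = carrier N \<and>
     f ` carrier M = {x \<in> carrier E. g x = \<zero>\<^bsub>N\<^esub>}"

definition ses_splits ::
  "('r, 'c) ring_scheme \<Rightarrow> ('r, 'e, 'f) module_scheme \<Rightarrow> ('r, 'n, 'g) module_scheme
     \<Rightarrow> ('e \<Rightarrow> 'n) \<Rightarrow> bool" where
  "ses_splits R E N g \<longleftrightarrow> (\<exists>s \<in> module_hom R N E. \<forall>y\<in>carrier N. g (s y) = y)"

text \<open>Ext^1_R(N,M) = 0 (Yoneda description): every extension of N by M splits.
  Extensions E range over modules with carrier type 'e; in the theorem 'e is a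
  free (hence universally quantified) type variable.\<close>

definition Ext1_zero ::
  "('r, 'c) ring_scheme \<Rightarrow> ('r, 'n, 'g) module_scheme \<Rightarrow> ('r, 'm, 'd) module_scheme
     \<Rightarrow> 'e itself \<Rightarrow> bool" where
  "Ext1_zero R N M (_ :: 'e itself) \<longleftrightarrow>
     (\<forall>(E :: ('r, 'e) module) f g. short_exact R M E N f g \<longrightarrow> ses_splits R E N g)"

end

theory Submission
  imports Defs
begin

text \<open>
  Multiplication by a natural number n is an R-linear endomorphism of every left module, so in
  an extension 0 \<rightarrow> M \<rightarrow> E \<rightarrow> N \<rightarrow> 0 both nE and the n-torsion E[n] are submodules, and any
  submodule of E mapped bijectively onto N yields a splitting. If n kills M and acts bijectively
  on N, then nE is such a complement; if n kills N and acts bijectively on M, then E[n] is one.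
  A positive characteristic c kills the module, since c is the additive order of the identity
  in End_R. In (1), char(M) kills M and acts bijectively on N by Bezout, as char(N) kills N.
  In (2) and (3), every positive n acts bijectively on the simple module of characteristic 0:
  nM and M[n] are submodules, and characteristic 0 excludes nM = 0 and M[n] = M.
\<close>

lemma left_module_abelian_group: "left_module R M \<Longrightarrow> abelian_group M"
  by (simp add: left_module_def)

lemma left_module_smult_closed:
  "left_module R M \<Longrightarrow> r \<in> carrier R \<Longrightarrow> x \<in> carrier M \<Longrightarrow> r \<odot>\<^bsub>M\<^esub> x \<in> carrier M"
  by (simp add: left_module_def module_axioms_def)

lemma left_module_smult_group_hom:
  assumes "left_module R M" "r \<in> carrier R"
  shows "group_hom (add_monoid M) (add_monoid M) (\<lambda>x. r \<odot>\<^bsub>M\<^esub> x)"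
proof -
  have "group (add_monoid M)"
    using assms(1) left_module_abelian_group abelian_group.a_group by blast
  moreover have "(\<lambda>x. r \<odot>\<^bsub>M\<^esub> x) \<in> hom (add_monoid M) (add_monoid M)"
    using assms unfolding left_module_def module_axioms_def hom_def by auto
  ultimately show ?thesis
    by (simp add: group_hom_def group_hom_axioms_def)
qed

lemma left_module_smult_zero:
  "left_module R M \<Longrightarrow> r \<in> carrier R \<Longrightarrow> r \<odot>\<^bsub>M\<^esub> \<zero>\<^bsub>M\<^esub> = \<zero>\<^bsub>M\<^esub>"
  using group_hom.hom_one[OF left_module_smult_group_hom] by simp

lemma left_module_smult_add_pow:
  fixes n :: nat
  shows "left_module R M \<Longrightarrow> r \<in> carrier R \<Longrightarrow> x \<in> carrier M
    \<Longrightarrow> r \<odot>\<^bsub>M\<^esub> (add_pow M n x) = add_pow M n (r \<odot>\<^bsub>M\<^esub> x)"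
  using group_hom.hom_nat_pow[OF left_module_smult_group_hom] by (simp add: add_pow_def)

lemma module_hom_closed: "f \<in> module_hom R M N \<Longrightarrow> x \<in> carrier M \<Longrightarrow> f x \<in> carrier N"
  unfolding module_hom_def by auto

lemma module_hom_add:
  "f \<in> module_hom R M N \<Longrightarrow> x \<in> carrier M \<Longrightarrow> y \<in> carrier M
    \<Longrightarrow> f (x \<oplus>\<^bsub>M\<^esub> y) = f x \<oplus>\<^bsub>N\<^esub> f y"
  unfolding module_hom_def by auto

lemma module_hom_smult:
  "f \<in> module_hom R M N \<Longrightarrow> r \<in> carrier R \<Longrightarrow> x \<in> carrier M
    \<Longrightarrow> f (r \<odot>\<^bsub>M\<^esub> x) = r \<odot>\<^bsub>N\<^esub> f x"
  unfolding module_hom_def by auto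

lemma module_hom_group_hom:
  assumes "abelian_group M" "abelian_group N" "f \<in> module_hom R M N"
  shows "group_hom (add_monoid M) (add_monoid N) f"
proof -
  have "group (add_monoid M)" "group (add_monoid N)"
    using assms abelian_group.a_group by blast+
  moreover have "f \<in> hom (add_monoid M) (add_monoid N)"
    using assms(3) unfolding module_hom_def hom_def by auto
  ultimately show ?thesis
    by (simp add: group_hom_def group_hom_axioms_def)
qed

lemma module_hom_zero:
  "abelian_group M \<Longrightarrow> abelian_group N \<Longrightarrow> f \<in> module_hom R M N \<Longrightarrow> f \<zero>\<^bsub>M\<^esub> = \<zero>\<^bsub>N\<^esub>"
  using group_hom.hom_one[OF module_hom_group_hom] by simp

lemma module_hom_a_inv:
  "abelian_group M \<Longrightarrow> abelian_group N \<Longrightarrow> f \<in> module_hom R M N \<Longrightarrow> x \<in> carrier M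
    \<Longrightarrow> f (\<ominus>\<^bsub>M\<^esub> x) = \<ominus>\<^bsub>N\<^esub> f x"
  using group_hom.hom_inv[OF module_hom_group_hom] by (simp add: a_inv_def)

lemma module_hom_minus:
  assumes "abelian_group M" "abelian_group N" "f \<in> module_hom R M N" "x \<in> carrier M" "y \<in> carrier M"
  shows "f (x \<ominus>\<^bsub>M\<^esub> y) = f x \<ominus>\<^bsub>N\<^esub> f y"
  using assms module_hom_add[OF assms(3)] module_hom_a_inv[OF assms(1-3)]
  by (simp add: a_minus_def abelian_group.a_inv_closed)

lemma module_hom_add_pow:
  fixes n :: nat
  shows "abelian_group M \<Longrightarrow> abelian_group N \<Longrightarrow> f \<in> module_hom R M N \<Longrightarrow> x \<in> carrier M
    \<Longrightarrow> f (add_pow M n x) = add_pow N n (f x)"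
  using group_hom.hom_nat_pow[OF module_hom_group_hom] by (simp add: add_pow_def)

lemma submoduleI':
  assumes "H \<subseteq> carrier M" "\<zero>\<^bsub>M\<^esub> \<in> H"
    "\<And>x. x \<in> H \<Longrightarrow> \<ominus>\<^bsub>M\<^esub> x \<in> H"
    "\<And>x y. x \<in> H \<Longrightarrow> y \<in> H \<Longrightarrow> x \<oplus>\<^bsub>M\<^esub> y \<in> H"
    "\<And>r x. r \<in> carrier R \<Longrightarrow> x \<in> H \<Longrightarrow> r \<odot>\<^bsub>M\<^esub> x \<in> H"
  shows "submodule H R M"
  using assms by (auto intro!: submodule.intro subgroup.intro simp: submodule_axioms_def a_inv_def)

lemma submoduleD:
  assumes "submodule H R M"
  shows "H \<subseteq> carrier M" "\<zero>\<^bsub>M\<^esub> \<in> H"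
    "x \<in> H \<Longrightarrow> \<ominus>\<^bsub>M\<^esub> x \<in> H"
    "x \<in> H \<Longrightarrow> y \<in> H \<Longrightarrow> x \<oplus>\<^bsub>M\<^esub> y \<in> H"
    "r \<in> carrier R \<Longrightarrow> x \<in> H \<Longrightarrow> r \<odot>\<^bsub>M\<^esub> x \<in> H"
  using assms subgroup.subset subgroup.one_closed subgroup.m_inv_closed subgroup.m_closed
    submodule.smult_closed submodule.axioms(1)
  by (fastforce simp: a_inv_def)+

lemma submodule_image_module_hom:
  assumes M: "left_module R M" and N: "left_module R N" and f: "f \<in> module_hom R M N"
  shows "submodule (f ` carrier M) R N"
proof -
  interpret M: abelian_group M using M by (rule left_module_abelian_group)
  interpret N: abelian_group N using N by (rule left_module_abelian_group)
  note f_facts = module_hom_closed[OF f] module_hom_add[OF f] module_hom_smult[OF f]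
    module_hom_zero[OF M.abelian_group_axioms N.abelian_group_axioms f]
    module_hom_a_inv[OF M.abelian_group_axioms N.abelian_group_axioms f]
  show ?thesis
  proof (rule submoduleI')
    show "f ` carrier M \<subseteq> carrier N" "\<zero>\<^bsub>N\<^esub> \<in> f ` carrier M"
      using f_facts by (auto intro!: image_eqI[where x = "\<zero>\<^bsub>M\<^esub>"])
  next
    fix x assume "x \<in> f ` carrier M"
    then obtain x' where "x' \<in> carrier M" "x = f x'" by blast
    then show "\<ominus>\<^bsub>N\<^esub> x \<in> f ` carrier M"
      using f_facts by (auto intro!: image_eqI[where x = "\<ominus>\<^bsub>M\<^esub> x'"])
  next
    fix x y assume "x \<in> f ` carrier M" "y \<in> f ` carrier M"
    then obtain x' y' where "x' \<in> carrier M" "y' \<in> carrier M" "x = f x'" "y = f y'" by blast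
    then show "x \<oplus>\<^bsub>N\<^esub> y \<in> f ` carrier M"
      using f_facts by (auto intro!: image_eqI[where x = "x' \<oplus>\<^bsub>M\<^esub> y'"])
  next
    fix r x assume "r \<in> carrier R" "x \<in> f ` carrier M"
    then obtain x' where "x' \<in> carrier M" "x = f x'" by blast
    with \<open>r \<in> carrier R\<close> show "r \<odot>\<^bsub>N\<^esub> x \<in> f ` carrier M"
      using f_facts left_module_smult_closed[OF M]
      by (auto intro!: image_eqI[where x = "r \<odot>\<^bsub>M\<^esub> x'"])
  qed
qed

lemma submodule_kernel_module_hom:
  assumes M: "left_module R M" and N: "left_module R N" and f: "f \<in> module_hom R M N"
  shows "submodule {x \<in> carrier M. f x = \<zero>\<^bsub>N\<^esub>} R M"
proof -
  interpret M: abelian_group M using M by (rule left_module_abelian_group)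
  interpret N: abelian_group N using N by (rule left_module_abelian_group)
  show ?thesis
    by (rule submoduleI')
      (simp_all add: module_hom_add[OF f] module_hom_smult[OF f] left_module_smult_closed[OF M]
        module_hom_zero[OF M.abelian_group_axioms N.abelian_group_axioms f]
        module_hom_a_inv[OF M.abelian_group_axioms N.abelian_group_axioms f]
        left_module_smult_zero[OF N])
qed

lemma inj_on_submodule_if_trivial_kernel:
  assumes M: "abelian_group M" and N: "abelian_group N" and f: "f \<in> module_hom R M N"
    and H: "submodule H R M" and ker: "\<And>x. x \<in> H \<Longrightarrow> f x = \<zero>\<^bsub>N\<^esub> \<Longrightarrow> x = \<zero>\<^bsub>M\<^esub>"
  shows "inj_on f H"
proof (rule inj_onI)
  interpret M: abelian_group M by (rule M)
  interpret N: abelian_group N by (rule N)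
  fix x y assume x: "x \<in> H" and y: "y \<in> H" and "f x = f y"
  have xy: "x \<in> carrier M" "y \<in> carrier M" using x y submoduleD(1)[OF H] by auto
  have "x \<ominus>\<^bsub>M\<^esub> y \<in> H"
    using x y submoduleD(3,4)[OF H] by (simp add: a_minus_def)
  moreover have "f (x \<ominus>\<^bsub>M\<^esub> y) = \<zero>\<^bsub>N\<^esub>"
    using module_hom_minus[OF M N f xy] module_hom_closed[OF f] xy \<open>f x = f y\<close>
    by (simp add: N.r_neg a_minus_def)
  ultimately have "x \<ominus>\<^bsub>M\<^esub> y = \<zero>\<^bsub>M\<^esub>" by (rule ker)
  then show "x = y"
    using xy by (metis M.a_inv_closed M.minus_equality M.minus_minus a_minus_def)
qed

lemma restrict_add_pow_module_hom:
  fixes n :: nat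
  assumes M: "left_module R M"
  shows "(\<lambda>x\<in>carrier M. add_pow M n x) \<in> module_hom R M M"
proof -
  interpret M: abelian_group M using M by (rule left_module_abelian_group)
  show ?thesis
    unfolding module_hom_def
    by (simp add: M.add.nat_pow_distrib left_module_smult_closed[OF M] left_module_smult_add_pow[OF M])
qed

definition multiples :: "('a, 'b) ring_scheme \<Rightarrow> nat \<Rightarrow> 'a set" where
  "multiples M n = add_pow M n ` carrier M"

definition torsion :: "('a, 'b) ring_scheme \<Rightarrow> nat \<Rightarrow> 'a set" where
  "torsion M n = {x \<in> carrier M. add_pow M n x = \<zero>\<^bsub>M\<^esub>}"

lemma submodule_multiples:
  assumes M: "left_module R M"
  shows "submodule (multiples M n) R M"
  using submodule_image_module_hom[OF M M restrict_add_pow_module_hom[OF M]]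
  by (simp only: image_restrict_eq multiples_def)

lemma submodule_torsion:
  assumes M: "left_module R M"
  shows "submodule (torsion M n) R M"
proof -
  have "torsion M n = {x \<in> carrier M. (\<lambda>x\<in>carrier M. add_pow M n x) x = \<zero>\<^bsub>M\<^esub>}"
    by (auto simp: torsion_def)
  then show ?thesis
    using submodule_kernel_module_hom[OF M M restrict_add_pow_module_hom[OF M]] by simp
qed

lemma ses_splits_if_bij_betw_submodule:
  assumes g: "g \<in> module_hom R E N" and S: "submodule S R E" and bij: "bij_betw g S (carrier N)"
  shows "ses_splits R E N g"
proof -
  define s where "s = (\<lambda>y\<in>carrier N. inv_into S g y)"
  have s_in: "s y \<in> S" and g_s: "g (s y) = y" if "y \<in> carrier N" for y
    using that bij bij_betw_imp_surj_on[OF bij]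
    by (auto simp: s_def bij_betw_inv_into_right inv_into_into)
  have s_g: "s (g x) = x" if "x \<in> S" for x
    using that bij bij_betw_imp_surj_on[OF bij] by (auto simp: s_def bij_betw_inv_into_left)
  have E: "s y \<in> carrier E" if "y \<in> carrier N" for y
    using s_in[OF that] submoduleD(1)[OF S] by blast
  have "s \<in> module_hom R N E"
    unfolding module_hom_def
  proof (intro CollectI conjI ballI)
    show "s \<in> carrier N \<rightarrow>\<^sub>E carrier E" using E by (simp add: s_def)
  next
    fix y1 y2 assume y: "y1 \<in> carrier N" "y2 \<in> carrier N"
    have "s (y1 \<oplus>\<^bsub>N\<^esub> y2) = s (g (s y1 \<oplus>\<^bsub>E\<^esub> s y2))"
      using module_hom_add[OF g E[OF y(1)] E[OF y(2)]] g_s y by simp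
    also have "\<dots> = s y1 \<oplus>\<^bsub>E\<^esub> s y2"
      using s_g submoduleD(4)[OF S s_in[OF y(1)] s_in[OF y(2)]] by blast
    finally show "s (y1 \<oplus>\<^bsub>N\<^esub> y2) = s y1 \<oplus>\<^bsub>E\<^esub> s y2" .
  next
    fix r y assume r: "r \<in> carrier R" and y: "y \<in> carrier N"
    have "s (r \<odot>\<^bsub>N\<^esub> y) = s (g (r \<odot>\<^bsub>E\<^esub> s y))"
      using module_hom_smult[OF g r E[OF y]] g_s y by simp
    also have "\<dots> = r \<odot>\<^bsub>E\<^esub> s y"
      using s_g submoduleD(5)[OF S r s_in[OF y]] by blast
    finally show "s (r \<odot>\<^bsub>N\<^esub> y) = r \<odot>\<^bsub>E\<^esub> s y" .
  qed
  then show ?thesis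
    unfolding ses_splits_def using g_s by blast
qed

lemma short_exact_abelian_groups:
  assumes "short_exact R M E N f g"
  shows "abelian_group M" "abelian_group E" "abelian_group N"
  using assms left_module_abelian_group unfolding short_exact_def by blast+

lemma ses_splits_if_complement:
  assumes ses: "short_exact R M E N f g" and S: "submodule S R E"
    and onto: "g ` S = carrier N" and ker: "\<And>x. x \<in> S \<Longrightarrow> g x = \<zero>\<^bsub>N\<^esub> \<Longrightarrow> x = \<zero>\<^bsub>E\<^esub>"
  shows "ses_splits R E N g"
proof -
  have g: "g \<in> module_hom R E N" using ses by (simp add: short_exact_def)
  have "inj_on g S"
    by (rule inj_on_submodule_if_trivial_kernel[OF short_exact_abelian_groups(2,3)[OF ses] g S ker])
  with onto have "bij_betw g S (carrier N)" by (simp add: bij_betw_def)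
  then show ?thesis by (rule ses_splits_if_bij_betw_submodule[OF g S])
qed

lemma short_exact_kernelE:
  assumes "short_exact R M E N f g" "x \<in> carrier E" "g x = \<zero>\<^bsub>N\<^esub>"
  obtains m where "m \<in> carrier M" "x = f m"
proof -
  have "x \<in> f ` carrier M" using assms by (simp add: short_exact_def)
  with that show thesis by blast
qed

lemma short_exact_comp_zero:
  "short_exact R M E N f g \<Longrightarrow> m \<in> carrier M \<Longrightarrow> g (f m) = \<zero>\<^bsub>N\<^esub>"
  unfolding short_exact_def by blast

lemma short_exact_multiples_onto:
  assumes ses: "short_exact R M E N f g" and N: "multiples N a = carrier N"
  shows "g ` multiples E a = carrier N"
proof -
  have g: "g \<in> module_hom R E N" and onto: "g ` carrier E = carrier N"
    using ses by (simp_all add: short_exact_def)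
  note groups = short_exact_abelian_groups[OF ses]
  have "g ` multiples E a = add_pow N a ` g ` carrier E"
    unfolding multiples_def image_image
    using module_hom_add_pow[OF groups(2,3) g] by (rule image_cong[OF refl])
  then show ?thesis
    using onto N by (simp add: multiples_def)
qed

lemma short_exact_multiples_kernel_trivial:
  assumes ses: "short_exact R M E N f g"
    and M: "torsion M a = carrier M" and N: "torsion N a = {\<zero>\<^bsub>N\<^esub>}"
    and x: "x \<in> multiples E a" and gx: "g x = \<zero>\<^bsub>N\<^esub>"
  shows "x = \<zero>\<^bsub>E\<^esub>"
proof -
  have f: "f \<in> module_hom R M E" and g: "g \<in> module_hom R E N"
    using ses by (simp_all add: short_exact_def)
  note groups = short_exact_abelian_groups[OF ses]
  obtain e where e: "e \<in> carrier E" and x_eq: "x = add_pow E a e"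
    using x unfolding multiples_def by blast
  have "add_pow N a (g e) = \<zero>\<^bsub>N\<^esub>"
    using gx x_eq module_hom_add_pow[OF groups(2,3) g e] by simp
  then have "g e \<in> torsion N a"
    using module_hom_closed[OF g e] by (simp add: torsion_def)
  then have "g e = \<zero>\<^bsub>N\<^esub>" using N by blast
  then obtain m where m: "m \<in> carrier M" and "e = f m" by (rule short_exact_kernelE[OF ses e])
  then have "x = f (add_pow M a m)"
    using x_eq module_hom_add_pow[OF groups(1,2) f m] by simp
  also have "add_pow M a m = \<zero>\<^bsub>M\<^esub>"
    using m M unfolding torsion_def by blast
  finally show ?thesis
    using module_hom_zero[OF groups(1,2) f] by simp
qed

lemma short_exact_torsion_onto:
  assumes ses: "short_exact R M E N f g"
    and N: "torsion N b = carrier N" and M: "multiples M b = carrier M"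
  shows "g ` torsion E b = carrier N"
proof -
  have f: "f \<in> module_hom R M E" and g: "g \<in> module_hom R E N"
    and onto: "g ` carrier E = carrier N"
    using ses by (simp_all add: short_exact_def)
  note groups = short_exact_abelian_groups[OF ses]
  interpret E: abelian_group E by (rule groups(2))
  interpret N: abelian_group N by (rule groups(3))
  have "y \<in> g ` torsion E b" if y: "y \<in> carrier N" for y
  proof -
    obtain e where e: "e \<in> carrier E" and ge: "g e = y"
      using y unfolding onto[symmetric] by blast
    have "add_pow N b y = \<zero>\<^bsub>N\<^esub>" using y N unfolding torsion_def by blast
    then have "g (add_pow E b e) = \<zero>\<^bsub>N\<^esub>"
      using module_hom_add_pow[OF groups(2,3) g e] ge by simp
    then obtain m where m: "m \<in> carrier M" and fm: "add_pow E b e = f m"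
      by (rule short_exact_kernelE[OF ses E.add.nat_pow_closed[OF e]])
    obtain m' where m': "m' \<in> carrier M" and m_eq: "m = add_pow M b m'"
      using m M unfolding multiples_def by blast
    have fm': "f m' \<in> carrier E" by (rule module_hom_closed[OF f m'])
    have "add_pow E b (e \<ominus>\<^bsub>E\<^esub> f m') = add_pow E b e \<ominus>\<^bsub>E\<^esub> add_pow E b (f m')"
      using e fm' by (simp add: a_minus_def E.add.nat_pow_distrib E.add.nat_pow_inv)
    also have "\<dots> = \<zero>\<^bsub>E\<^esub>"
      using fm m_eq module_hom_add_pow[OF groups(1,2) f m'] fm' by (simp add: E.r_neg a_minus_def)
    finally have "e \<ominus>\<^bsub>E\<^esub> f m' \<in> torsion E b"
      using e fm' by (simp add: torsion_def)
    moreover have "g (e \<ominus>\<^bsub>E\<^esub> f m') = y"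
      using module_hom_minus[OF groups(2,3) g e fm'] ge short_exact_comp_zero[OF ses m'] y
      by (simp add: a_minus_def)
    ultimately show ?thesis by blast
  qed
  moreover have "g ` torsion E b \<subseteq> carrier N"
    using module_hom_closed[OF g] unfolding torsion_def by auto
  ultimately show ?thesis by blast
qed

lemma short_exact_torsion_kernel_trivial:
  assumes ses: "short_exact R M E N f g" and M: "torsion M b = {\<zero>\<^bsub>M\<^esub>}"
    and x: "x \<in> torsion E b" and gx: "g x = \<zero>\<^bsub>N\<^esub>"
  shows "x = \<zero>\<^bsub>E\<^esub>"
proof -
  have f: "f \<in> module_hom R M E" and inj_f: "inj_on f (carrier M)"
    using ses by (simp_all add: short_exact_def)
  note groups = short_exact_abelian_groups[OF ses]
  interpret M: abelian_group M by (rule groups(1))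
  have x: "x \<in> carrier E" "add_pow E b x = \<zero>\<^bsub>E\<^esub>"
    using x unfolding torsion_def by auto
  obtain m where m: "m \<in> carrier M" and xm: "x = f m" by (rule short_exact_kernelE[OF ses x(1) gx])
  have "f (add_pow M b m) = f \<zero>\<^bsub>M\<^esub>"
    using module_hom_add_pow[OF groups(1,2) f m] x(2) xm module_hom_zero[OF groups(1,2) f] by simp
  then have "add_pow M b m = \<zero>\<^bsub>M\<^esub>"
    by (rule inj_onD[OF inj_f]) (simp_all add: m)
  then have "m \<in> torsion M b" using m by (simp add: torsion_def)
  then show ?thesis
    using M xm module_hom_zero[OF groups(1,2) f] by simp
qed

lemma Ext1_zero_via_multiples:
  fixes R :: "('r, 'c) ring_scheme"
  assumes "torsion M a = carrier M"
    and "multiples N a = carrier N" and "torsion N a = {\<zero>\<^bsub>N\<^esub>}"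
  shows "Ext1_zero R N M TYPE('e)"
  unfolding Ext1_zero_def
proof (intro allI impI)
  fix E :: "('r, 'e) module" and f g
  assume ses: "short_exact R M E N f g"
  then have "submodule (multiples E a) R E"
    by (intro submodule_multiples) (simp add: short_exact_def)
  then show "ses_splits R E N g"
    using ses_splits_if_complement[OF ses] short_exact_multiples_onto[OF ses]
      short_exact_multiples_kernel_trivial[OF ses] assms by blast
qed

lemma Ext1_zero_via_torsion:
  fixes R :: "('r, 'c) ring_scheme"
  assumes "torsion N b = carrier N"
    and "multiples M b = carrier M" and "torsion M b = {\<zero>\<^bsub>M\<^esub>}"
  shows "Ext1_zero R N M TYPE('e)"
  unfolding Ext1_zero_def
proof (intro allI impI)
  fix E :: "('r, 'e) module" and f g
  assume ses: "short_exact R M E N f g"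
  then have "submodule (torsion E b) R E"
    by (intro submodule_torsion) (simp add: short_exact_def)
  then show "ses_splits R E N g"
    using ses_splits_if_complement[OF ses] short_exact_torsion_onto[OF ses]
      short_exact_torsion_kernel_trivial[OF ses] assms by blast
qed

lemma ring_char_LEAST:
  assumes "\<exists>n::nat. 0 < n \<and> add_pow A n \<one>\<^bsub>A\<^esub> = \<zero>\<^bsub>A\<^esub>"
  shows "0 < ring_char A" and "add_pow A (ring_char A) \<one>\<^bsub>A\<^esub> = \<zero>\<^bsub>A\<^esub>"
proof -
  have "ring_char A = (LEAST n::nat. 0 < n \<and> add_pow A n \<one>\<^bsub>A\<^esub> = \<zero>\<^bsub>A\<^esub>)"
    unfolding ring_char_def using assms by (rule if_P)
  then show "0 < ring_char A" "add_pow A (ring_char A) \<one>\<^bsub>A\<^esub> = \<zero>\<^bsub>A\<^esub>"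
    using LeastI_ex[OF assms] by simp_all
qed

lemma ring_char_add_pow_one:
  assumes "0 < ring_char A"
  shows "add_pow A (ring_char A) \<one>\<^bsub>A\<^esub> = \<zero>\<^bsub>A\<^esub>"
proof (rule ring_char_LEAST(2))
  show "\<exists>n::nat. 0 < n \<and> add_pow A n \<one>\<^bsub>A\<^esub> = \<zero>\<^bsub>A\<^esub>"
  proof (rule ccontr)
    assume "\<not> ?thesis"
    then have "ring_char A = 0" unfolding ring_char_def by (rule if_not_P)
    with assms show False by simp
  qed
qed

lemma ring_char_eq_0_add_pow_one:
  fixes n :: nat
  assumes "ring_char A = 0" and "0 < n"
  shows "add_pow A n \<one>\<^bsub>A\<^esub> \<noteq> \<zero>\<^bsub>A\<^esub>"
proof
  assume "add_pow A n \<one>\<^bsub>A\<^esub> = \<zero>\<^bsub>A\<^esub>"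
  with \<open>0 < n\<close> have "0 < ring_char A" by (blast intro: ring_char_LEAST(1))
  with assms(1) show False by simp
qed

lemma End_ring_add_pow_one:
  fixes n :: nat
  shows "add_pow (End_ring R M) n \<one>\<^bsub>End_ring R M\<^esub> = (\<lambda>x\<in>carrier M. add_pow M n x)"
proof (induction n)
  case 0
  show ?case by (simp add: add_pow_def End_ring_def)
next
  case (Suc n)
  then show ?case
    by (simp add: add_pow_def End_ring_def restrict_def fun_eq_iff)
qed

lemma End_ring_add_pow_one_eq_zero_iff:
  fixes n :: nat
  shows "add_pow (End_ring R M) n \<one>\<^bsub>End_ring R M\<^esub> = \<zero>\<^bsub>End_ring R M\<^esub>
    \<longleftrightarrow> (\<forall>x\<in>carrier M. add_pow M n x = \<zero>\<^bsub>M\<^esub>)"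
  unfolding End_ring_add_pow_one by (auto simp: End_ring_def restrict_def fun_eq_iff)

lemma torsion_module_char:
  "0 < module_char R M \<Longrightarrow> torsion M (module_char R M) = carrier M"
  using ring_char_add_pow_one[of "End_ring R M"]
  unfolding module_char_def End_ring_add_pow_one_eq_zero_iff torsion_def by blast

lemma torsion_ne_carrier_if_module_char_eq_0:
  fixes n :: nat
  assumes "module_char R M = 0" and "0 < n"
  shows "torsion M n \<noteq> carrier M"
proof -
  have "add_pow (End_ring R M) n \<one>\<^bsub>End_ring R M\<^esub> \<noteq> \<zero>\<^bsub>End_ring R M\<^esub>"
    using assms unfolding module_char_def by (rule ring_char_eq_0_add_pow_one)
  then show ?thesis
    unfolding End_ring_add_pow_one_eq_zero_iff torsion_def by blast
qed

lemma multiples_torsion_if_coprime: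
  fixes a b :: nat
  assumes A: "abelian_group A" and b: "torsion A b = carrier A"
    and "coprime a b" and "0 < a"
  shows "multiples A a = carrier A" and "torsion A a = {\<zero>\<^bsub>A\<^esub>}"
proof -
  interpret abelian_group A by (rule A)
  obtain u v where "a * u = b * v + gcd a b" using bezout_nat \<open>0 < a\<close> by blast
  with \<open>coprime a b\<close> have bezout: "a * u = b * v + 1" by simp
  have inverse: "add_pow A u (add_pow A a y) = y" "add_pow A a (add_pow A u y) = y"
    if y: "y \<in> carrier A" for y
  proof -
    have "add_pow A (a * u) y = add_pow A v (add_pow A b y) \<oplus>\<^bsub>A\<^esub> y"
      unfolding bezout using y by (simp add: add.nat_pow_mult[symmetric] add.nat_pow_pow)
    also have "add_pow A b y = \<zero>\<^bsub>A\<^esub>" using b y unfolding torsion_def by blast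
    finally have "add_pow A (a * u) y = y" using y by simp
    then show "add_pow A u (add_pow A a y) = y" "add_pow A a (add_pow A u y) = y"
      using y by (simp_all add: add.nat_pow_pow mult.commute)
  qed
  have "y \<in> multiples A a" if "y \<in> carrier A" for y
    using inverse(2)[OF that] add.nat_pow_closed[OF that] unfolding multiples_def by (metis image_eqI)
  then show "multiples A a = carrier A"
    by (auto simp: multiples_def)
  show "torsion A a = {\<zero>\<^bsub>A\<^esub>}"
    unfolding torsion_def using inverse(1) by force
qed

lemma multiples_torsion_if_simple:
  fixes n :: nat
  assumes simple: "simple_module R M" and "module_char R M = 0" and "0 < n"
  shows "multiples M n = carrier M" and "torsion M n = {\<zero>\<^bsub>M\<^esub>}"
proof -
  have M: "left_module R M"
    and sub: "\<And>H. submodule H R M \<Longrightarrow> H = {\<zero>\<^bsub>M\<^esub>} \<or> H = carrier M"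
    using simple unfolding simple_module_def by auto
  have "torsion M n \<noteq> carrier M"
    using assms(2,3) by (rule torsion_ne_carrier_if_module_char_eq_0)
  then show "torsion M n = {\<zero>\<^bsub>M\<^esub>}"
    using sub[OF submodule_torsion[OF M]] by blast
  then have "multiples M n \<noteq> {\<zero>\<^bsub>M\<^esub>}"
    using \<open>torsion M n \<noteq> carrier M\<close> unfolding multiples_def torsion_def by blast
  then show "multiples M n = carrier M"
    using sub[OF submodule_multiples[OF M]] by blast
qed

theorem mainTheorem4:
  fixes R :: "('r, 'c) ring_scheme"
    and M :: "('r, 'm) module" and N :: "('r, 'n) module"
  assumes "ring R" and "left_module R M" and "left_module R N"
  shows "(module_char R M > 0 \<and> module_char R N > 0 \<and>
            coprime (module_char R M) (module_char R N)
            \<longrightarrow> Ext1_zero R N M TYPE('e))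
       \<and> (simple_module R M \<and> module_char R M = 0 \<and> module_char R N \<noteq> 0
            \<longrightarrow> Ext1_zero R N M TYPE('e))
       \<and> (simple_module R M \<and> simple_module R N \<and>
            module_char R M \<noteq> 0 \<and> module_char R N = 0
            \<longrightarrow> Ext1_zero R N M TYPE('e))"
proof -
  let ?a = "module_char R M" and ?b = "module_char R N"
  have "Ext1_zero R N M TYPE('e)" if "0 < ?a" "0 < ?b" "coprime ?a ?b"
    using torsion_module_char[OF that(1)]
      multiples_torsion_if_coprime[OF left_module_abelian_group[OF assms(3)]
        torsion_module_char[OF that(2)] that(3,1)]
    by (rule Ext1_zero_via_multiples)
  moreover have "Ext1_zero R N M TYPE('e)" if "simple_module R M" "?a = 0" "0 < ?b"
    using torsion_module_char[OF that(3)] multiples_torsion_if_simple[OF that]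
    by (rule Ext1_zero_via_torsion)
  moreover have "Ext1_zero R N M TYPE('e)" if "simple_module R N" "?b = 0" "0 < ?a"
    using torsion_module_char[OF that(3)] multiples_torsion_if_simple[OF that]
    by (rule Ext1_zero_via_multiples)
  ultimately show ?thesis by auto
qed

end
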